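(* Let $\Omega$ be the closure of a bounded domain in $\mathbb{R}^d$, let $X$ be a Banach space of functions on $\Omega$ with $C(\Omega)\subset X$ and $\|g\|_X\le C_X\|g\|_{C(\Omega)}$ for $g\in C(\Omega)$, and let $K$ be a compact subset of $C(\Omega)$. Let ${\bf x}=(x_1,\dots,x_m)\in\Omega^m$, $f\in K$, $w:=\lambda_{\bf x}(f)$, and assume $R(K_w)_X\neq0$. Define on $C(\Omega)$ $$\mathcal{L}'_K(g):=\|\lambda_{\bf x}(g)-w\|+\operatorname{dist}(g,K)_{C(\Omega)} .$$ Let $C>2$ and let $\delta>0$ satisfy $$C_X\varepsilon+2R(K(w,2\varepsilon))_X\le C\,R(K_w)_X,\qquad\varepsilon:=2\delta$$ (this holds for all sufficiently small $\delta$). Let $\Sigma\subset C(\Omega)$ satisfy $\operatorname{dist}(K,\Sigma)_{C(\Omega)}<\delta$ and let $\hat f\in\mathop{\rm argmin}_{g\in\Sigma}\mathcal{L}'_K(g)$ be any minimizer. Then $\|f-\hat f\|_X\le C\,R(K_w)_X$.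
   Context: $\lambda_{\bf x}(g):=(g(x_1),\dots,g(x_m))$; on $\mathbb{R}^m$, $\|v\|:=\big[\frac1m\sum_{j=1}^m|v_j|^2\big]^{1/2}$. $\operatorname{dist}(g,K)_{C(\Omega)}:=\inf_{h\in K}\|g-h\|_{C(\Omega)}$; for $A,B\subset C(\Omega)$, $\operatorname{dist}(A,B)_{C(\Omega)}:=\sup_{a\in A}\inf_{b\in B}\|a-b\|_{C(\Omega)}$. $K_{w'}:=\{h\in K:\lambda_{\bf x}(h)=w'\}$, $K(w,\varepsilon):=\bigcup_{w'\in\mathbb{R}^m,\ \|w'-w\|\le\varepsilon}K_{w'}$. For $S\subset X$, $R(S)_X:=\inf\{r:\ S\subset B(z,r)_X\text{ for some }z\in X\}$ (Chebyshev radius in $X$). *)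

theory Defs
  imports "HOL-Analysis.Analysis"
begin

definition CO :: "'a::topological_space set \<Rightarrow> ('a \<Rightarrow> real) set" where
  "CO Om = {g. continuous_on Om g \<and> (\<forall>x. x \<notin> Om \<longrightarrow> g x = 0)}"

definition supn :: "'a set \<Rightarrow> ('a \<Rightarrow> real) \<Rightarrow> real" where
  "supn Om g = (SUP x\<in>Om. \<bar>g x\<bar>)"

definition compact_C :: "'a::topological_space set \<Rightarrow> ('a \<Rightarrow> real) set \<Rightarrow> bool" where
  "compact_C Om K \<longleftrightarrow> K \<subseteq> CO Om \<and>
     (\<forall>s::nat \<Rightarrow> 'a \<Rightarrow> real. (\<forall>n. s n \<in> K) \<longrightarrow>
        (\<exists>(r::nat \<Rightarrow> nat) g. strict_mono r \<and> g \<in> K \<and> (\<lambda>n. supn Om (\<lambda>x. s (r n) x - g x)) \<longlonglongrightarrow> 0))"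

definition distC :: "'a set \<Rightarrow> ('a \<Rightarrow> real) \<Rightarrow> ('a \<Rightarrow> real) set \<Rightarrow> real" where
  "distC Om g K = (INF h\<in>K. supn Om (\<lambda>x. g x - h x))"

definition distCset :: "'a set \<Rightarrow> ('a \<Rightarrow> real) set \<Rightarrow> ('a \<Rightarrow> real) set \<Rightarrow> real" where
  "distCset Om A B = (SUP a\<in>A. INF b\<in>B. supn Om (\<lambda>x. a x - b x))"

text \<open>Sampling operator lambda_x for points xs 0, ..., xs (m-1); vectors in R^m are
  functions nat => real that vanish from index m on.\<close>
definition lam :: "nat \<Rightarrow> (nat \<Rightarrow> 'a) \<Rightarrow> ('a \<Rightarrow> real) \<Rightarrow> (nat \<Rightarrow> real)" where
  "lam m xs g = (\<lambda>j. if j < m then g (xs j) else 0)"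

definition vnorm :: "nat \<Rightarrow> (nat \<Rightarrow> real) \<Rightarrow> real" where
  "vnorm m v = sqrt ((1 / real m) * (\<Sum>j<m. (v j)\<^sup>2))"

definition Rm :: "nat \<Rightarrow> (nat \<Rightarrow> real) set" where
  "Rm m = {v. \<forall>j\<ge>m. v j = 0}"

definition Kw :: "nat \<Rightarrow> (nat \<Rightarrow> 'a) \<Rightarrow> ('a \<Rightarrow> real) set \<Rightarrow> (nat \<Rightarrow> real) \<Rightarrow> ('a \<Rightarrow> real) set" where
  "Kw m xs K w' = {h \<in> K. lam m xs h = w'}"

definition Kweps :: "nat \<Rightarrow> (nat \<Rightarrow> 'a) \<Rightarrow> ('a \<Rightarrow> real) set \<Rightarrow> (nat \<Rightarrow> real) \<Rightarrow> real \<Rightarrow> ('a \<Rightarrow> real) set" where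
  "Kweps m xs K w eps = (\<Union>w'\<in>{w'\<in>Rm m. vnorm m (\<lambda>j. w' j - w j) \<le> eps}. Kw m xs K w')"

text \<open>Chebyshev radius in X of a set S of functions, X given via the embedding J.\<close>
definition chebR :: "(('a \<Rightarrow> real) \<Rightarrow> 'x::real_normed_vector) \<Rightarrow> ('a \<Rightarrow> real) set \<Rightarrow> real" where
  "chebR J S = Inf {r. \<exists>z. J ` S \<subseteq> cball z r}"

definition lossK :: "'a set \<Rightarrow> nat \<Rightarrow> (nat \<Rightarrow> 'a) \<Rightarrow> ('a \<Rightarrow> real) set \<Rightarrow> (nat \<Rightarrow> real) \<Rightarrow> ('a \<Rightarrow> real) \<Rightarrow> real" where
  "lossK Om m xs K w g = vnorm m (\<lambda>j. lam m xs g j - w j) + distC Om g K"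

end

theory Submission
  imports Defs
begin

text \<open>Take g \<in> \<Sigma> uniformly \<delta>-close to f. Then L'(g) < 2\<delta> = \<epsilon>, and by minimality also
  L'(fhat) < \<epsilon>: the samples of fhat are \<epsilon>-close to w, and fhat is uniformly \<epsilon>-close to
  some h \<in> K. The samples of h are then 2\<epsilon>-close to w, so f and h both lie in K(w,2\<epsilon>),
  whose diameter in X is at most twice its Chebyshev radius. Hence
  ||f - fhat||_X \<le> ||f - h||_X + ||h - fhat||_X \<le> 2 R(K(w,2\<epsilon>))_X + C_X \<epsilon> \<le> C R(K_w)_X.\<close>

lemma supn_upper:
  assumes "compact Om" "continuous_on Om g" "x \<in> Om"
  shows "\<bar>g x\<bar> \<le> supn Om g"
proof -
  have "compact ((\<lambda>x. \<bar>g x\<bar>) ` Om)"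
    using assms(1,2) by (intro compact_continuous_image continuous_on_rabs)
  then have "bdd_above ((\<lambda>x. \<bar>g x\<bar>) ` Om)"
    by (intro bounded_imp_bdd_above compact_imp_bounded)
  then show ?thesis
    unfolding supn_def by (rule cSUP_upper[OF assms(3)])
qed

lemma supn_nonneg:
  assumes "compact Om" "Om \<noteq> {}" "continuous_on Om g"
  shows "0 \<le> supn Om g"
  using assms supn_upper[OF assms(1,3)] by force

lemma supn_least:
  assumes "Om \<noteq> {}" "\<And>x. x \<in> Om \<Longrightarrow> \<bar>g x\<bar> \<le> s"
  shows "supn Om g \<le> s"
  unfolding supn_def using assms by (rule cSUP_least)

lemma supn_le_add:
  assumes "compact Om" "Om \<noteq> {}" "continuous_on Om v" "continuous_on Om w"
    and "\<And>x. x \<in> Om \<Longrightarrow> \<bar>u x\<bar> \<le> \<bar>v x\<bar> + \<bar>w x\<bar>"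
  shows "supn Om u \<le> supn Om v + supn Om w"
  using assms(2)
proof (rule supn_least)
  fix x assume "x \<in> Om"
  then show "\<bar>u x\<bar> \<le> supn Om v + supn Om w"
    using assms(5) supn_upper[OF assms(1,3)] supn_upper[OF assms(1,4)] by fastforce
qed

lemma supn_diff_commute: "supn Om (\<lambda>x. a x - b x) = supn Om (\<lambda>x. b x - a x)"
  unfolding supn_def by (simp add: abs_minus_commute)

lemma CO_continuous_on: "g \<in> CO Om \<Longrightarrow> continuous_on Om g"
  by (simp add: CO_def)

lemma CO_diff: "a \<in> CO Om \<Longrightarrow> b \<in> CO Om \<Longrightarrow> (\<lambda>x. a x - b x) \<in> CO Om"
  by (auto simp: CO_def intro: continuous_on_diff)

lemma compact_C_bounded:
  assumes "compact Om" "Om \<noteq> {}" "compact_C Om K"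
  shows "\<exists>M. \<forall>g\<in>K. supn Om g \<le> M"
proof (rule ccontr)
  assume "\<nexists>M. \<forall>g\<in>K. supn Om g \<le> M"
  then have "\<forall>n::nat. \<exists>g. g \<in> K \<and> real n < supn Om g"
    by (meson not_le)
  then obtain s where s: "\<And>n. s n \<in> K" "\<And>n. real n < supn Om (s n)"
    by metis
  have cont: "\<And>g. g \<in> K \<Longrightarrow> continuous_on Om g"
    using assms(3) by (auto simp: compact_C_def CO_def)
  obtain r g where r: "strict_mono r" and g: "g \<in> K"
    and lim: "(\<lambda>n. supn Om (\<lambda>x. s (r n) x - g x)) \<longlonglongrightarrow> 0"
    using assms(3) s(1) unfolding compact_C_def by blast
  obtain N where N: "\<And>n. n \<ge> N \<Longrightarrow> supn Om (\<lambda>x. s (r n) x - g x) < 1"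
    using order_tendstoD(2)[OF lim zero_less_one] by (auto simp: eventually_sequentially)
  define n where "n = max N (nat \<lceil>supn Om g + 1\<rceil>)"
  have "supn Om (s (r n)) \<le> supn Om (\<lambda>x. s (r n) x - g x) + supn Om g"
    using assms(1,2) cont s(1) g by (intro supn_le_add continuous_on_diff) auto
  also have "\<dots> < 1 + supn Om g"
    using N[of n] by (simp add: n_def)
  also have "\<dots> \<le> real (r n)"
    using seq_suble[OF r, of n] unfolding n_def by linarith
  finally show False
    using s(2)[of "r n"] by simp
qed

lemma vnorm_nonneg: "0 \<le> vnorm m v"
  unfolding vnorm_def by (simp add: sum_nonneg)

lemma vnorm_triangle: "vnorm m (\<lambda>j. a j + b j) \<le> vnorm m a + vnorm m b"
proof -
  have vnorm_L2: "\<And>v. vnorm m v = sqrt (1 / real m) * L2_set v {..<m}"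
    unfolding vnorm_def L2_set_def by (simp only: real_sqrt_mult)
  show ?thesis
    unfolding vnorm_L2 distrib_left[symmetric]
    by (intro mult_left_mono L2_set_triangle_ineq) simp
qed

lemma vnorm_le:
  assumes "m > 0" "\<And>j. j < m \<Longrightarrow> \<bar>v j\<bar> \<le> s"
  shows "vnorm m v \<le> s"
proof -
  have s: "0 \<le> s"
    using assms(2)[OF assms(1)] by linarith
  have "(\<Sum>j<m. (v j)\<^sup>2) \<le> (\<Sum>j<m. s\<^sup>2)"
    using assms(2) by (intro sum_mono) (metis abs_ge_zero lessThan_iff power2_abs power_mono)
  then have "(1 / real m) * (\<Sum>j<m. (v j)\<^sup>2) \<le> s\<^sup>2"
    using assms(1) by (simp add: field_simps)
  then have "vnorm m v \<le> sqrt (s\<^sup>2)"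
    unfolding vnorm_def by (rule real_sqrt_le_mono)
  with s show ?thesis by simp
qed

lemma vnorm_lam_diff_le_supn:
  assumes "compact Om" "m > 0" "xs ` {..<m} \<subseteq> Om"
    and "continuous_on Om a" "continuous_on Om b"
  shows "vnorm m (\<lambda>j. lam m xs a j - lam m xs b j) \<le> supn Om (\<lambda>x. a x - b x)"
  using assms(2)
proof (rule vnorm_le)
  fix j assume "j < m"
  with assms(3) have "xs j \<in> Om"
    by blast
  with \<open>j < m\<close> show "\<bar>lam m xs a j - lam m xs b j\<bar> \<le> supn Om (\<lambda>x. a x - b x)"
    using supn_upper[OF assms(1) continuous_on_diff[OF assms(4,5)]] by (simp add: lam_def)
qed

lemma lam_in_Rm: "lam m xs g \<in> Rm m"
  by (simp add: Rm_def lam_def)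

lemma bdd_below_supn_dist:
  assumes "compact Om" "Om \<noteq> {}" "K \<subseteq> CO Om" "continuous_on Om g"
  shows "bdd_below ((\<lambda>h. supn Om (\<lambda>x. g x - h x)) ` K)"
proof (rule bdd_belowI2)
  fix h assume "h \<in> K"
  with assms(3) have "continuous_on Om h"
    using CO_continuous_on by blast
  with assms(1,2,4) show "0 \<le> supn Om (\<lambda>x. g x - h x)"
    by (intro supn_nonneg continuous_on_diff)
qed

lemma distC_le_supn:
  assumes "compact Om" "Om \<noteq> {}" "K \<subseteq> CO Om" "continuous_on Om g" "h \<in> K"
  shows "distC Om g K \<le> supn Om (\<lambda>x. g x - h x)"
  unfolding distC_def using bdd_below_supn_dist[OF assms(1-4)] assms(5) by (rule cINF_lower)

lemma distC_nonneg:
  assumes "compact Om" "Om \<noteq> {}" "K \<subseteq> CO Om" "K \<noteq> {}" "continuous_on Om g"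
  shows "0 \<le> distC Om g K"
  unfolding distC_def using assms(4)
proof (rule cINF_greatest)
  fix h assume "h \<in> K"
  with assms(3) have "continuous_on Om h"
    using CO_continuous_on by blast
  with assms(1,2,5) show "0 \<le> supn Om (\<lambda>x. g x - h x)"
    by (intro supn_nonneg continuous_on_diff)
qed

lemma distC_lessD:
  assumes "K \<noteq> {}" "distC Om g K < e"
  shows "\<exists>h\<in>K. supn Om (\<lambda>x. g x - h x) < e"
proof -
  have "\<exists>y\<in>(\<lambda>h. supn Om (\<lambda>x. g x - h x)) ` K. y < e"
    using assms unfolding distC_def by (intro cInf_lessD) auto
  then show ?thesis by blast
qed

lemma distCset_lessD:
  assumes "compact Om" "Om \<noteq> {}" "K \<subseteq> CO Om" "\<Sigma> \<subseteq> CO Om" "\<Sigma> \<noteq> {}"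
    and "\<And>g. g \<in> K \<Longrightarrow> supn Om g \<le> M" "f \<in> K" "distCset Om K \<Sigma> < \<delta>"
  shows "\<exists>g\<in>\<Sigma>. supn Om (\<lambda>x. f x - g x) < \<delta>"
proof -
  obtain s where s: "s \<in> \<Sigma>"
    using assms(5) by blast
  have "distC Om k \<Sigma> \<le> M + supn Om s" if k: "k \<in> K" for k
  proof -
    have "distC Om k \<Sigma> \<le> supn Om (\<lambda>x. k x - s x)"
      using assms(1-4) k s by (intro distC_le_supn) (auto intro: CO_continuous_on)
    also have "\<dots> \<le> supn Om k + supn Om s"
      using assms(1-4) k s by (intro supn_le_add) (auto intro: CO_continuous_on)
    finally show ?thesis
      using assms(6)[OF k] by linarith
  qed
  then have "bdd_above ((\<lambda>k. distC Om k \<Sigma>) ` K)"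
    by (rule bdd_aboveI2)
  then have "distC Om f \<Sigma> < \<delta>"
    using cSUP_upper[OF assms(7)] assms(8) by (fastforce simp: distCset_def distC_def)
  then show ?thesis
    using distC_lessD[OF assms(5)] by blast
qed

lemma Kweps_subset: "Kweps m xs K w e \<subseteq> K"
  by (auto simp: Kweps_def Kw_def)

lemma Kweps_center:
  assumes "f \<in> K" "0 \<le> e"
  shows "f \<in> Kweps m xs K (lam m xs f) e"
  using assms lam_in_Rm[of m xs f] by (auto simp: Kweps_def Kw_def vnorm_def)

lemma lossK_le_twice_supn:
  assumes "compact Om" "Om \<noteq> {}" "m > 0" "xs ` {..<m} \<subseteq> Om"
    and "K \<subseteq> CO Om" "f \<in> K" "continuous_on Om g"
  shows "lossK Om m xs K (lam m xs f) g \<le> 2 * supn Om (\<lambda>x. g x - f x)"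
  using vnorm_lam_diff_le_supn[OF assms(1,3,4,7), of f] distC_le_supn[OF assms(1,2,5,7,6)]
    assms(5,6) by (auto simp: lossK_def CO_def)

lemma lossK_less_imp_near_Kweps:
  assumes "compact Om" "Om \<noteq> {}" "m > 0" "xs ` {..<m} \<subseteq> Om"
    and "K \<subseteq> CO Om" "K \<noteq> {}" "continuous_on Om g" "lossK Om m xs K w g < e"
  shows "\<exists>h\<in>Kweps m xs K w (2 * e). supn Om (\<lambda>x. g x - h x) < e"
proof -
  have sample: "vnorm m (\<lambda>j. lam m xs g j - w j) < e" and dist: "distC Om g K < e"
    using assms(8) vnorm_nonneg distC_nonneg[OF assms(1,2,5,6,7)] unfolding lossK_def
    by (smt (verit))+
  obtain h where h: "h \<in> K" "supn Om (\<lambda>x. g x - h x) < e"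
    using distC_lessD[OF assms(6) dist] by blast
  have "vnorm m (\<lambda>j. lam m xs h j - w j)
      \<le> vnorm m (\<lambda>j. lam m xs h j - lam m xs g j) + vnorm m (\<lambda>j. lam m xs g j - w j)"
    using vnorm_triangle[of m "\<lambda>j. lam m xs h j - lam m xs g j" "\<lambda>j. lam m xs g j - w j"] by simp
  also have "\<dots> < 2 * e"
  proof -
    have "continuous_on Om h"
      using h(1) assms(5) CO_continuous_on by blast
    then show ?thesis
      using vnorm_lam_diff_le_supn[OF assms(1,3,4) _ assms(7)] h(2) sample
        supn_diff_commute[of Om h g] by fastforce
  qed
  finally have "h \<in> Kweps m xs K w (2 * e)"
    using h(1) lam_in_Rm[of m xs h] by (auto simp: Kweps_def Kw_def)
  with h(2) show ?thesis by blast
qed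

lemma diff_le_twice_chebR:
  assumes "bounded (J ` S)" "a \<in> S" "b \<in> S"
  shows "norm (J a - J b) \<le> 2 * chebR J S"
proof -
  have "norm (J a - J b) / 2 \<le> chebR J S"
    unfolding chebR_def
  proof (rule cInf_greatest)
    show "{r. \<exists>z. J ` S \<subseteq> cball z r} \<noteq> {}"
      using assms(1) by (auto simp: bounded_subset_cball)
  next
    fix r assume "r \<in> {r. \<exists>z. J ` S \<subseteq> cball z r}"
    then obtain z where "J ` S \<subseteq> cball z r"
      by blast
    with assms(2,3) have "dist z (J a) \<le> r" "dist z (J b) \<le> r"
      by auto
    moreover have "norm (J a - J b) \<le> dist z (J a) + dist z (J b)"
      by (metis dist_commute dist_norm dist_triangle)
    ultimately show "norm (J a - J b) / 2 \<le> r" by simp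
  qed
  then show ?thesis by simp
qed

text \<open>If CX < 0, the bound would force J to vanish on CO Om, which contains the two distinct
  functions 0 and the indicator of Om.\<close>
lemma embedding_constant_nonneg:
  assumes "compact Om" "Om \<noteq> {}" "inj_on J (CO Om)"
    and "\<And>g. g \<in> CO Om \<Longrightarrow> norm (J g) \<le> CX * supn Om g"
  shows "0 \<le> CX"
proof (rule ccontr)
  assume "\<not> 0 \<le> CX"
  then have J0: "J g = 0" if "g \<in> CO Om" for g
    using assms(4)[OF that] supn_nonneg[OF assms(1,2) CO_continuous_on[OF that]]
    by (smt (verit) mult_nonpos_nonneg norm_le_zero_iff)
  define e where "e = (\<lambda>x. if x \<in> Om then 1 else 0 :: real)"
  have "e \<in> CO Om" "(\<lambda>x. 0) \<in> CO Om"
    by (auto simp: CO_def e_def intro: continuous_on_eq[of Om "\<lambda>x. 1"])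
  then have "e = (\<lambda>x. 0)"
    using J0 assms(3) by (metis inj_onD)
  moreover obtain x where "x \<in> Om"
    using assms(2) by blast
  ultimately show False
    by (metis e_def zero_neq_one)
qed

lemma bounded_embedding_image:
  assumes "S \<subseteq> CO Om" "\<And>g. g \<in> S \<Longrightarrow> supn Om g \<le> M" "0 \<le> CX"
    and "\<And>g. g \<in> CO Om \<Longrightarrow> norm (J g) \<le> CX * supn Om g"
  shows "bounded (J ` S)"
  unfolding bounded_iff
proof (intro exI ballI)
  fix y assume "y \<in> J ` S"
  then obtain g where g: "g \<in> S" "y = J g" by blast
  with assms(1,4) have "norm y \<le> CX * supn Om g"
    by blast
  also have "\<dots> \<le> CX * M"
    using mult_left_mono[OF assms(2)[OF g(1)] assms(3)] .
  finally show "norm y \<le> CX * M" .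
qed

lemma norm_embedding_diff_le:
  assumes "\<And>g h. g \<in> CO Om \<Longrightarrow> h \<in> CO Om \<Longrightarrow> J (\<lambda>x. g x + h x) = J g + J h"
    and "\<And>c g. g \<in> CO Om \<Longrightarrow> J (\<lambda>x. c * g x) = c *\<^sub>R J g"
    and "\<And>g. g \<in> CO Om \<Longrightarrow> norm (J g) \<le> CX * supn Om g"
    and "a \<in> CO Om" "b \<in> CO Om"
  shows "norm (J a - J b) \<le> CX * supn Om (\<lambda>x. a x - b x)"
proof -
  have minus_b: "(\<lambda>x. -1 * b x) \<in> CO Om"
    using assms(5) by (auto simp: CO_def intro: continuous_intros)
  have "J (\<lambda>x. a x - b x) = J (\<lambda>x. a x + -1 * b x)"
    by simp
  also have "\<dots> = J a + J (\<lambda>x. -1 * b x)"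
    by (rule assms(1)[OF assms(4) minus_b])
  also have "\<dots> = J a - J b"
    using assms(2)[OF assms(5), of "-1"] by simp
  finally show ?thesis
    using assms(3)[OF CO_diff[OF assms(4,5)]] by simp
qed

theorem theorem4p5:
  fixes D :: "'a::euclidean_space set"
    and J :: "('a \<Rightarrow> real) \<Rightarrow> 'x::banach"
    and CX :: real
    and K Sigma :: "('a \<Rightarrow> real) set"
    and m :: nat and xs :: "nat \<Rightarrow> 'a"
    and f fhat :: "'a \<Rightarrow> real"
    and C \<delta> :: real
  defines "Om \<equiv> closure D"
  defines "w \<equiv> lam m xs f"
  defines "\<epsilon> \<equiv> 2 * \<delta>"
  assumes D: "open D" "connected D" "bounded D" "D \<noteq> {}"
    and J_add: "\<And>g h. g \<in> CO Om \<Longrightarrow> h \<in> CO Om \<Longrightarrow> J (\<lambda>x. g x + h x) = J g + J h"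
    and J_scale: "\<And>c g. g \<in> CO Om \<Longrightarrow> J (\<lambda>x. c * g x) = c *\<^sub>R J g"
    and J_inj: "inj_on J (CO Om)"
    and J_bound: "\<And>g. g \<in> CO Om \<Longrightarrow> norm (J g) \<le> CX * supn Om g"
    and K: "compact_C Om K"
    and m: "m > 0"
    and xs: "\<And>i. i < m \<Longrightarrow> xs i \<in> Om"
    and f: "f \<in> K"
    and R0: "chebR J (Kw m xs K w) \<noteq> 0"
    and C: "C > 2"
    and \<delta>: "\<delta> > 0"
    and cond: "CX * \<epsilon> + 2 * chebR J (Kweps m xs K w (2 * \<epsilon>)) \<le> C * chebR J (Kw m xs K w)"
    and Sigma: "Sigma \<subseteq> CO Om"
    and dist: "distCset Om K Sigma < \<delta>"
    and fhat: "fhat \<in> Sigma" "\<And>g. g \<in> Sigma \<Longrightarrow> lossK Om m xs K w fhat \<le> lossK Om m xs K w g"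
  shows "norm (J f - J fhat) \<le> C * chebR J (Kw m xs K w)"
proof -
  have Om: "compact Om" "Om \<noteq> {}"
    using D(3,4) closure_subset by (auto simp: Om_def compact_eq_bounded_closed)
  have xs: "xs ` {..<m} \<subseteq> Om"
    using xs by blast
  have KCO: "K \<subseteq> CO Om"
    using K by (simp add: compact_C_def)
  obtain M where M: "\<And>g. g \<in> K \<Longrightarrow> supn Om g \<le> M"
    using compact_C_bounded[OF Om K] by blast
  have CX: "0 \<le> CX"
    using embedding_constant_nonneg[OF Om J_inj J_bound] .
  obtain g where g: "g \<in> Sigma" "supn Om (\<lambda>x. f x - g x) < \<delta>"
    using distCset_lessD[OF Om KCO Sigma _ M f dist] fhat(1) by blast
  have "lossK Om m xs K w fhat \<le> 2 * supn Om (\<lambda>x. g x - f x)"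
    using fhat(2)[OF g(1)] lossK_le_twice_supn[OF Om m xs KCO f, where g = g] g(1) Sigma
    by (force simp: w_def intro: CO_continuous_on)
  also have "\<dots> < \<epsilon>"
    using g(2) supn_diff_commute[of Om g f] by (simp add: \<epsilon>_def)
  finally obtain h where h: "h \<in> Kweps m xs K w (2 * \<epsilon>)" "supn Om (\<lambda>x. fhat x - h x) < \<epsilon>"
    using lossK_less_imp_near_Kweps[OF Om m xs KCO _ CO_continuous_on] f fhat(1) Sigma by blast
  have "bounded (J ` Kweps m xs K w (2 * \<epsilon>))"
    using Kweps_subset[of m xs K w "2 * \<epsilon>"] KCO M CX J_bound
    by (intro bounded_embedding_image) auto
  moreover have "f \<in> Kweps m xs K w (2 * \<epsilon>)"
    using Kweps_center[OF f] \<delta> by (simp add: w_def \<epsilon>_def)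
  ultimately have "norm (J f - J h) \<le> 2 * chebR J (Kweps m xs K w (2 * \<epsilon>))"
    using h(1) by (rule diff_le_twice_chebR)
  moreover have "norm (J h - J fhat) \<le> CX * \<epsilon>"
  proof -
    have "h \<in> CO Om" "fhat \<in> CO Om"
      using h(1) Kweps_subset KCO fhat(1) Sigma by blast+
    with J_add J_scale J_bound have "norm (J h - J fhat) \<le> CX * supn Om (\<lambda>x. h x - fhat x)"
      by (rule norm_embedding_diff_le)
    also have "\<dots> \<le> CX * \<epsilon>"
      using h(2) supn_diff_commute[of Om fhat h] CX by (simp add: mult_left_mono)
    finally show ?thesis .
  qed
  ultimately show ?thesis
    using cond norm_triangle_ineq[of "J f - J h" "J h - J fhat"] by simp
qed

end
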